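(* Let $(D,\mu)$ be an associative algebra over a field $k$, $\alpha:D\to D$ an algebra endomorphism, and $T:D\otimes D\to D\otimes D$ a pseudotwistor with companions $\tilde T_1,\tilde T_2$, i.e. linear maps $\tilde T_1,\tilde T_2:D^{\otimes 3}\to D^{\otimes 3}$ with $T\circ(\mathrm{id}_D\otimes\mu)=(\mathrm{id}_D\otimes\mu)\circ\tilde T_1\circ(T\otimes\mathrm{id}_D)$, $T\circ(\mu\otimes\mathrm{id}_D)=(\mu\otimes\mathrm{id}_D)\circ\tilde T_2\circ(\mathrm{id}_D\otimes T)$ and $\tilde T_1\circ(T\otimes\mathrm{id}_D)\circ(\mathrm{id}_D\otimes T)=\tilde T_2\circ(\mathrm{id}_D\otimes T)\circ(T\otimes\mathrm{id}_D)$. Assume moreover $(\alpha\otimes\alpha)\circ T=T\circ(\alpha\otimes\alpha)$. Consider the associative algebra $D^T=(D,\mu\circ T)$ and the Hom-associative algebra $D_\alpha=(D,\alpha\circ\mu,\alpha)$. Then $T$ is a Hom-pseudotwistor for $D_\alpha$ with companions $\tilde T_1,\tilde T_2$, the map $\alpha$ is an algebra endomorphism of $D^T$, and the Hom-associative algebras $(D_\alpha)^T=(D,(\alpha\circ\mu)\circ T,\alpha)$ and $(D^T)_\alpha=(D,\alpha\circ(\mu\circ T),\alpha)$ coincide. In particular, if $T$ is a twistor for $D$, then $T$ is a Hom-twistor for $D_\alpha$.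
   Context: Algebras are over $k$ and not assumed unital. A Hom-associative algebra is $(A,\mu,\alpha)$ with $\alpha(aa')=\alpha(a)\alpha(a')$ and $\alpha(a)(a'a'')=(aa')\alpha(a'')$. For a Hom-associative algebra $(D,\mu,\alpha)$, a linear $T:D\otimes D\to D\otimes D$ is a Hom-pseudotwistor with companions $\tilde T_1,\tilde T_2:D^{\otimes3}\to D^{\otimes 3}$ if $(\alpha\otimes\alpha)\circ T=T\circ(\alpha\otimes\alpha)$, $T\circ(\alpha\otimes\mu)=(\alpha\otimes\mu)\circ\tilde T_1\circ(T\otimes\mathrm{id})$, $T\circ(\mu\otimes\alpha)=(\mu\otimes\alpha)\circ\tilde T_2\circ(\mathrm{id}\otimes T)$, $\tilde T_1\circ(T\otimes\mathrm{id})\circ(\mathrm{id}\otimes T)=\tilde T_2\circ(\mathrm{id}\otimes T)\circ(T\otimes\mathrm{id})$; then $(D,\mu\circ T,\alpha)$ is Hom-associative. Write $T(d\otimes d')=d^T\otimes d'_T$, $T_{12}=T\otimes\mathrm{id}$, $T_{23}=\mathrm{id}\otimes T$, $T_{13}(d\otimes d'\otimes d'')=d^T\otimes d'\otimes d''_T$. For an associative algebra $(D,\mu)$, a twistor is a linear $T$ with $T\circ(\mathrm{id}\otimes\mu)=(\mathrm{id}\otimes\mu)\circ T_{13}\circ T_{12}$, $T\circ(\mu\otimes\mathrm{id})=(\mu\otimes\mathrm{id})\circ T_{13}\circ T_{23}$, $T_{12}\circ T_{23}=T_{23}\circ T_{12}$. For a Hom-associative algebra $(D,\mu,\alpha)$,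 a Hom-twistor is a linear $T$ with $(\alpha\otimes\alpha)\circ T=T\circ(\alpha\otimes\alpha)$, $T\circ(\alpha\otimes\mu)=(\alpha\otimes\mu)\circ T_{13}\circ T_{12}$, $T\circ(\mu\otimes\alpha)=(\mu\otimes\alpha)\circ T_{13}\circ T_{23}$, $T_{12}\circ T_{23}=T_{23}\circ T_{12}$. It is known that $D^T$ is associative for a pseudotwistor $T$, and $D_\alpha$ is Hom-associative for an algebra endomorphism $\alpha$. *)

theory Defs
  imports "HOL-Library.Poly_Mapping"
begin

(* A vector space over the field 'k with basis indexed by 'a is the space of
  finitely supported functions 'a \<Rightarrow>_0 'k.  The tensor product of the spaces
  with bases 'a and 'c is the space with basis 'a \<times> 'c.  Thus the algebra D is
  'b \<Rightarrow>_0 'k, D\<otimes>D is 'b \<times> 'b \<Rightarrow>_0 'k and D\<otimes>D\<otimes>D is 'b \<times> 'b \<times> 'b \<Rightarrow>_0 'k. *)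

definition vscale :: "'k::field \<Rightarrow> ('a \<Rightarrow>\<^sub>0 'k) \<Rightarrow> ('a \<Rightarrow>\<^sub>0 'k)" where
  "vscale c x = Poly_Mapping.map (\<lambda>v. c * v) x"

definition lin :: "(('a \<Rightarrow>\<^sub>0 'k::field) \<Rightarrow> ('c \<Rightarrow>\<^sub>0 'k)) \<Rightarrow> bool" where
  "lin f \<longleftrightarrow> (\<forall>x y. f (x + y) = f x + f y) \<and> (\<forall>c x. f (vscale c x) = vscale c (f x))"

abbreviation bv :: "'a \<Rightarrow> ('a \<Rightarrow>\<^sub>0 'k::field)" where
  "bv i \<equiv> Poly_Mapping.single i 1"

definition extend :: "('a \<Rightarrow> ('c \<Rightarrow>\<^sub>0 'k::field)) \<Rightarrow> ('a \<Rightarrow>\<^sub>0 'k) \<Rightarrow> ('c \<Rightarrow>\<^sub>0 'k)" where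
  "extend b x = (\<Sum>i\<in>Poly_Mapping.keys x. vscale (Poly_Mapping.lookup x i) (b i))"

definition tprod :: "('a \<Rightarrow>\<^sub>0 'k::field) \<Rightarrow> ('c \<Rightarrow>\<^sub>0 'k) \<Rightarrow> ('a \<times> 'c \<Rightarrow>\<^sub>0 'k)" where
  "tprod x y = Abs_poly_mapping (\<lambda>(i, j). Poly_Mapping.lookup x i * Poly_Mapping.lookup y j)"

definition tmap :: "(('a \<Rightarrow>\<^sub>0 'k::field) \<Rightarrow> ('x \<Rightarrow>\<^sub>0 'k)) \<Rightarrow> (('c \<Rightarrow>\<^sub>0 'k) \<Rightarrow> ('y \<Rightarrow>\<^sub>0 'k))
    \<Rightarrow> ('a \<times> 'c \<Rightarrow>\<^sub>0 'k) \<Rightarrow> ('x \<times> 'y \<Rightarrow>\<^sub>0 'k)" where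
  "tmap f g = extend (\<lambda>(i, j). tprod (f (bv i)) (g (bv j)))"

(* F \<otimes> g : (V_1 \<otimes> V_2) \<otimes> V_3 \<rightarrow> W_1 \<otimes> W_2, with V_1 \<otimes> V_2 \<otimes> V_3 written right-nested *)
definition tmapL :: "(('a \<times> 'b \<Rightarrow>\<^sub>0 'k::field) \<Rightarrow> ('x \<Rightarrow>\<^sub>0 'k)) \<Rightarrow> (('c \<Rightarrow>\<^sub>0 'k) \<Rightarrow> ('y \<Rightarrow>\<^sub>0 'k))
    \<Rightarrow> ('a \<times> 'b \<times> 'c \<Rightarrow>\<^sub>0 'k) \<Rightarrow> ('x \<times> 'y \<Rightarrow>\<^sub>0 'k)" where
  "tmapL F g = extend (\<lambda>(i, j, l). tprod (F (bv (i, j))) (g (bv l)))"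

definition assocr :: "(('a \<times> 'b) \<times> 'c \<Rightarrow>\<^sub>0 'k::field) \<Rightarrow> ('a \<times> 'b \<times> 'c \<Rightarrow>\<^sub>0 'k)" where
  "assocr x = Abs_poly_mapping (\<lambda>(a, b, c). Poly_Mapping.lookup x ((a, b), c))"

definition T12 :: "(('b \<times> 'b \<Rightarrow>\<^sub>0 'k::field) \<Rightarrow> ('b \<times> 'b \<Rightarrow>\<^sub>0 'k))
    \<Rightarrow> ('b \<times> 'b \<times> 'b \<Rightarrow>\<^sub>0 'k) \<Rightarrow> ('b \<times> 'b \<times> 'b \<Rightarrow>\<^sub>0 'k)" where
  "T12 T = assocr \<circ> tmapL T id"

definition T23 :: "(('b \<times> 'b \<Rightarrow>\<^sub>0 'k::field) \<Rightarrow> ('b \<times> 'b \<Rightarrow>\<^sub>0 'k))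
    \<Rightarrow> ('b \<times> 'b \<times> 'b \<Rightarrow>\<^sub>0 'k) \<Rightarrow> ('b \<times> 'b \<times> 'b \<Rightarrow>\<^sub>0 'k)" where
  "T23 T = tmap id T"

(* T_1_3(d \<otimes> d' \<otimes> d'') = d^T \<otimes> d' \<otimes> d''_T *)
definition T13 :: "(('b \<times> 'b \<Rightarrow>\<^sub>0 'k::field) \<Rightarrow> ('b \<times> 'b \<Rightarrow>\<^sub>0 'k))
    \<Rightarrow> ('b \<times> 'b \<times> 'b \<Rightarrow>\<^sub>0 'k) \<Rightarrow> ('b \<times> 'b \<times> 'b \<Rightarrow>\<^sub>0 'k)" where
  "T13 T = extend (\<lambda>(i, j, l). Abs_poly_mapping
      (\<lambda>(p, j', q). Poly_Mapping.lookup (T (bv (i, l))) (p, q) when j' = j))"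

definition assoc_algebra :: "(('b \<times> 'b \<Rightarrow>\<^sub>0 'k::field) \<Rightarrow> ('b \<Rightarrow>\<^sub>0 'k)) \<Rightarrow> bool" where
  "assoc_algebra mu \<longleftrightarrow> lin mu \<and> mu \<circ> tmapL mu id = mu \<circ> tmap id mu"

definition alg_endo :: "(('b \<times> 'b \<Rightarrow>\<^sub>0 'k::field) \<Rightarrow> ('b \<Rightarrow>\<^sub>0 'k)) \<Rightarrow> (('b \<Rightarrow>\<^sub>0 'k) \<Rightarrow> ('b \<Rightarrow>\<^sub>0 'k)) \<Rightarrow> bool" where
  "alg_endo mu alpha \<longleftrightarrow> lin alpha \<and> alpha \<circ> mu = mu \<circ> tmap alpha alpha"

definition pseudotwistor :: "(('b \<times> 'b \<Rightarrow>\<^sub>0 'k::field) \<Rightarrow> ('b \<Rightarrow>\<^sub>0 'k))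
    \<Rightarrow> (('b \<times> 'b \<Rightarrow>\<^sub>0 'k) \<Rightarrow> ('b \<times> 'b \<Rightarrow>\<^sub>0 'k))
    \<Rightarrow> (('b \<times> 'b \<times> 'b \<Rightarrow>\<^sub>0 'k) \<Rightarrow> ('b \<times> 'b \<times> 'b \<Rightarrow>\<^sub>0 'k))
    \<Rightarrow> (('b \<times> 'b \<times> 'b \<Rightarrow>\<^sub>0 'k) \<Rightarrow> ('b \<times> 'b \<times> 'b \<Rightarrow>\<^sub>0 'k)) \<Rightarrow> bool" where
  "pseudotwistor mu T T1 T2 \<longleftrightarrow> lin T \<and> lin T1 \<and> lin T2 \<and>
     T \<circ> tmap id mu = tmap id mu \<circ> T1 \<circ> T12 T \<and>
     T \<circ> tmapL mu id = tmapL mu id \<circ> T2 \<circ> T23 T \<and>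
     T1 \<circ> T12 T \<circ> T23 T = T2 \<circ> T23 T \<circ> T12 T"

definition hom_pseudotwistor :: "(('b \<times> 'b \<Rightarrow>\<^sub>0 'k::field) \<Rightarrow> ('b \<Rightarrow>\<^sub>0 'k))
    \<Rightarrow> (('b \<Rightarrow>\<^sub>0 'k) \<Rightarrow> ('b \<Rightarrow>\<^sub>0 'k))
    \<Rightarrow> (('b \<times> 'b \<Rightarrow>\<^sub>0 'k) \<Rightarrow> ('b \<times> 'b \<Rightarrow>\<^sub>0 'k))
    \<Rightarrow> (('b \<times> 'b \<times> 'b \<Rightarrow>\<^sub>0 'k) \<Rightarrow> ('b \<times> 'b \<times> 'b \<Rightarrow>\<^sub>0 'k))
    \<Rightarrow> (('b \<times> 'b \<times> 'b \<Rightarrow>\<^sub>0 'k) \<Rightarrow> ('b \<times> 'b \<times> 'b \<Rightarrow>\<^sub>0 'k)) \<Rightarrow> bool" where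
  "hom_pseudotwistor mu alpha T T1 T2 \<longleftrightarrow> lin T \<and> lin T1 \<and> lin T2 \<and>
     tmap alpha alpha \<circ> T = T \<circ> tmap alpha alpha \<and>
     T \<circ> tmap alpha mu = tmap alpha mu \<circ> T1 \<circ> T12 T \<and>
     T \<circ> tmapL mu alpha = tmapL mu alpha \<circ> T2 \<circ> T23 T \<and>
     T1 \<circ> T12 T \<circ> T23 T = T2 \<circ> T23 T \<circ> T12 T"

definition twistor :: "(('b \<times> 'b \<Rightarrow>\<^sub>0 'k::field) \<Rightarrow> ('b \<Rightarrow>\<^sub>0 'k))
    \<Rightarrow> (('b \<times> 'b \<Rightarrow>\<^sub>0 'k) \<Rightarrow> ('b \<times> 'b \<Rightarrow>\<^sub>0 'k)) \<Rightarrow> bool" where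
  "twistor mu T \<longleftrightarrow> lin T \<and>
     T \<circ> tmap id mu = tmap id mu \<circ> T13 T \<circ> T12 T \<and>
     T \<circ> tmapL mu id = tmapL mu id \<circ> T13 T \<circ> T23 T \<and>
     T12 T \<circ> T23 T = T23 T \<circ> T12 T"

definition hom_twistor :: "(('b \<times> 'b \<Rightarrow>\<^sub>0 'k::field) \<Rightarrow> ('b \<Rightarrow>\<^sub>0 'k))
    \<Rightarrow> (('b \<Rightarrow>\<^sub>0 'k) \<Rightarrow> ('b \<Rightarrow>\<^sub>0 'k))
    \<Rightarrow> (('b \<times> 'b \<Rightarrow>\<^sub>0 'k) \<Rightarrow> ('b \<times> 'b \<Rightarrow>\<^sub>0 'k)) \<Rightarrow> bool" where
  "hom_twistor mu alpha T \<longleftrightarrow> lin T \<and>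
     tmap alpha alpha \<circ> T = T \<circ> tmap alpha alpha \<and>
     T \<circ> tmap alpha mu = tmap alpha mu \<circ> T13 T \<circ> T12 T \<and>
     T \<circ> tmapL mu alpha = tmapL mu alpha \<circ> T13 T \<circ> T23 T \<and>
     T12 T \<circ> T23 T = T23 T \<circ> T12 T"

end

theory Submission
  imports Defs
begin

text \<open>
  Twisting by T and Yau twisting by \<alpha> commute because both constructions are composites
  of linear maps. Since \<alpha> \<otimes> \<alpha> is a functor applied to \<alpha>, the defining identities of a
  (pseudo)twistor for \<mu> turn into those for \<alpha> \<circ> \<mu> after composing on the left with
  \<alpha> \<otimes> \<alpha>, which T commutes with: \<alpha> \<otimes> (\<alpha> \<circ> \<mu>) = (\<alpha> \<otimes> \<alpha>) \<circ> (id \<otimes> \<mu>) and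
  (\<alpha> \<circ> \<mu>) \<otimes> \<alpha> = (\<alpha> \<otimes> \<alpha>) \<circ> (\<mu> \<otimes> id). Likewise \<alpha> \<circ> \<mu> \<circ> T = \<mu> \<circ> T \<circ> (\<alpha> \<otimes> \<alpha>).
\<close>

lemma lookup_vscale [simp]: "Poly_Mapping.lookup (vscale c x) i = c * Poly_Mapping.lookup x i"
  unfolding vscale_def by transfer (simp add: when_def)

lemma vscale_add_left: "vscale (a + b) x = vscale a x + vscale b x"
  by (rule poly_mapping_eqI) (simp add: lookup_add algebra_simps)

lemma vscale_zero_left [simp]: "vscale 0 x = 0"
  by (rule poly_mapping_eqI) simp

lemma vscale_one [simp]: "vscale 1 x = x"
  by (rule poly_mapping_eqI) simp

lemma vscale_vscale: "vscale a (vscale b x) = vscale (a * b) x"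
  by (rule poly_mapping_eqI) simp

lemma vscale_sum: "vscale c (sum f A) = (\<Sum>i\<in>A. vscale c (f i))"
  by (rule poly_mapping_eqI) (simp add: lookup_sum sum_distrib_left)

lemma lin_id: "lin id"
  by (simp add: lin_def)

lemma lin_vscale: "lin f \<Longrightarrow> f (vscale c x) = vscale c (f x)"
  by (simp add: lin_def)

lemma lin_zero: "lin f \<Longrightarrow> f 0 = 0"
  unfolding lin_def by (metis add_0 add_cancel_right_right)

lemma lin_sum: "lin f \<Longrightarrow> f (sum g A) = (\<Sum>i\<in>A. f (g i))"
  by (induction A rule: infinite_finite_induct) (auto simp: lin_zero lin_def)

lemma extend_superset:
  assumes "finite S" "Poly_Mapping.keys x \<subseteq> S"
  shows "extend b x = (\<Sum>i\<in>S. vscale (Poly_Mapping.lookup x i) (b i))"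
  unfolding extend_def
  by (rule sum.mono_neutral_left) (use assms in \<open>auto simp: in_keys_iff\<close>)

lemma lin_extend:
  fixes b :: "'a \<Rightarrow> ('c \<Rightarrow>\<^sub>0 'k::field)"
  shows "lin (extend b)"
  unfolding lin_def
proof (intro conjI allI)
  fix x y :: "'a \<Rightarrow>\<^sub>0 'k"
  let ?S = "Poly_Mapping.keys x \<union> Poly_Mapping.keys y"
  have "Poly_Mapping.keys (x + y) \<subseteq> ?S"
    by (simp add: keys_add)
  then show "extend b (x + y) = extend b x + extend b y"
    by (simp add: extend_superset[of ?S] lookup_add vscale_add_left sum.distrib)
next
  fix c and x :: "'a \<Rightarrow>\<^sub>0 'k"
  have "Poly_Mapping.keys (vscale c x) \<subseteq> Poly_Mapping.keys x"
    by (auto simp: in_keys_iff)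
  then show "extend b (vscale c x) = vscale c (extend b x)"
    by (simp add: extend_superset[of "Poly_Mapping.keys x"] vscale_sum vscale_vscale)
qed

lemma lin_tmap: "lin (tmap f g)"
  by (simp add: tmap_def lin_extend)

lemma extend_bv [simp]: "extend bv b = b"
  by (rule poly_mapping_eqI)
    (simp add: extend_def lookup_sum lookup_single when_def if_distrib sum.delta in_keys_iff
          cong: if_cong)

lemma extend_bv_single [simp]: "extend b (bv p) = b p"
  by (simp add: extend_def)

lemma lin_comp_extend: "lin f \<Longrightarrow> f (extend b x) = extend (f \<circ> b) x"
  unfolding extend_def by (simp add: lin_sum lin_vscale)

lemma lin_eq_extend_bv: "lin f \<Longrightarrow> f x = extend (f \<circ> bv) x"
  using lin_comp_extend[of f bv x] by simp

lemma lookup_tprod [simp]: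
  "Poly_Mapping.lookup (tprod x y) (i, j) = Poly_Mapping.lookup x i * Poly_Mapping.lookup y j"
proof -
  let ?g = "\<lambda>(i, j). Poly_Mapping.lookup x i * Poly_Mapping.lookup y j"
  have "{p. ?g p \<noteq> 0} \<subseteq> Poly_Mapping.keys x \<times> Poly_Mapping.keys y"
    by (auto simp: in_keys_iff)
  then have "finite {p. ?g p \<noteq> 0}"
    by (meson finite_SigmaI finite_keys finite_subset)
  then show ?thesis
    unfolding tprod_def by simp
qed

lemma tprod_bv_bv: "tprod (bv i) (bv j) = bv (i, j)"
  by (rule poly_mapping_eqI) (auto simp: lookup_single when_def split: if_splits)

lemma tprod_sum_vscale:
  "tprod (\<Sum>i\<in>A. vscale (a i) (x i)) (\<Sum>j\<in>B. vscale (b j) (y j))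
   = (\<Sum>i\<in>A. \<Sum>j\<in>B. vscale (a i * b j) (tprod (x i) (y j)))"
proof (rule poly_mapping_eqI)
  fix k :: "'a \<times> 'b"
  obtain p q where "k = (p, q)"
    by (cases k)
  then show "Poly_Mapping.lookup (tprod (\<Sum>i\<in>A. vscale (a i) (x i)) (\<Sum>j\<in>B. vscale (b j) (y j))) k
      = Poly_Mapping.lookup (\<Sum>i\<in>A. \<Sum>j\<in>B. vscale (a i * b j) (tprod (x i) (y j))) k"
    by (simp add: lookup_sum sum_product mult_ac)
qed

lemma tprod_extend:
  "tprod (extend f u) (extend g v)
   = (\<Sum>i\<in>Poly_Mapping.keys u. \<Sum>j\<in>Poly_Mapping.keys v.
        vscale (Poly_Mapping.lookup u i * Poly_Mapping.lookup v j) (tprod (f i) (g j)))"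
  unfolding extend_def by (rule tprod_sum_vscale)

lemma tmap_tprod:
  assumes "lin f" "lin g"
  shows "tmap f g (tprod u v) = tprod (f u) (g v)"
proof -
  have "tmap f g (tprod u v) = tmap f g (tprod (extend bv u) (extend bv v))"
    by simp
  also have "\<dots> = (\<Sum>i\<in>Poly_Mapping.keys u. \<Sum>j\<in>Poly_Mapping.keys v.
      vscale (Poly_Mapping.lookup u i * Poly_Mapping.lookup v j) (tprod (f (bv i)) (g (bv j))))"
    by (simp only: tprod_extend lin_sum[OF lin_tmap] lin_vscale[OF lin_tmap])
      (simp add: tprod_bv_bv tmap_def)
  also have "\<dots> = tprod (extend (f \<circ> bv) u) (extend (g \<circ> bv) v)"
    by (simp add: tprod_extend)
  also have "\<dots> = tprod (f u) (g v)"
    using assms by (simp add: lin_eq_extend_bv[symmetric])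
  finally show ?thesis .
qed

lemma tmap_comp_tmap:
  assumes "lin f" "lin g"
  shows "tmap f g \<circ> tmap f' g' = tmap (f \<circ> f') (g \<circ> g')"
proof
  fix x
  show "(tmap f g \<circ> tmap f' g') x = tmap (f \<circ> f') (g \<circ> g') x"
    unfolding comp_apply tmap_def[of f' g'] lin_comp_extend[OF lin_tmap]
      tmap_def[of "f \<circ> f'" "g \<circ> g'"]
    by (simp add: comp_def case_prod_unfold tmap_tprod[OF assms])
qed

lemma tmap_comp_tmapL:
  assumes "lin f" "lin g"
  shows "tmap f g \<circ> tmapL F g' = tmapL (f \<circ> F) (g \<circ> g')"
proof
  fix x
  show "(tmap f g \<circ> tmapL F g') x = tmapL (f \<circ> F) (g \<circ> g') x"
    unfolding comp_apply tmapL_def[of F g'] lin_comp_extend[OF lin_tmap]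
      tmapL_def[of "f \<circ> F" "g \<circ> g'"]
    by (simp add: comp_def case_prod_unfold tmap_tprod[OF assms])
qed

lemma intertwiner_comp_left:
  assumes "S \<circ> T = T \<circ> S" and "T \<circ> m = m \<circ> R"
  shows "T \<circ> (S \<circ> m) = (S \<circ> m) \<circ> R"
  by (metis assms comp_assoc)

context
  fixes mu :: "('b \<times> 'b \<Rightarrow>\<^sub>0 'k::field) \<Rightarrow> ('b \<Rightarrow>\<^sub>0 'k)"
    and alpha :: "('b \<Rightarrow>\<^sub>0 'k) \<Rightarrow> ('b \<Rightarrow>\<^sub>0 'k)"
    and T :: "('b \<times> 'b \<Rightarrow>\<^sub>0 'k) \<Rightarrow> ('b \<times> 'b \<Rightarrow>\<^sub>0 'k)"
  assumes alpha_lin: "lin alpha"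
    and T_commute: "tmap alpha alpha \<circ> T = T \<circ> tmap alpha alpha"
begin

lemma intertwine_tmap_yau:
  "T \<circ> tmap id mu = tmap id mu \<circ> R \<Longrightarrow>
   T \<circ> tmap alpha (alpha \<circ> mu) = tmap alpha (alpha \<circ> mu) \<circ> R"
  using intertwiner_comp_left[OF T_commute, of "tmap id mu" R]
  by (simp add: tmap_comp_tmap[OF alpha_lin alpha_lin])

lemma intertwine_tmapL_yau:
  "T \<circ> tmapL mu id = tmapL mu id \<circ> R \<Longrightarrow>
   T \<circ> tmapL (alpha \<circ> mu) alpha = tmapL (alpha \<circ> mu) alpha \<circ> R"
  using intertwiner_comp_left[OF T_commute, of "tmapL mu id" R]
  by (simp add: tmap_comp_tmapL[OF alpha_lin alpha_lin])

lemma hom_pseudotwistor_yau_twist: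
  "pseudotwistor mu T T1 T2 \<Longrightarrow> hom_pseudotwistor (alpha \<circ> mu) alpha T T1 T2"
  unfolding pseudotwistor_def hom_pseudotwistor_def
  using T_commute intertwine_tmap_yau intertwine_tmapL_yau by (simp add: comp_assoc)

lemma hom_twistor_yau_twist: "twistor mu T \<Longrightarrow> hom_twistor (alpha \<circ> mu) alpha T"
  unfolding twistor_def hom_twistor_def
  using T_commute intertwine_tmap_yau intertwine_tmapL_yau by (simp add: comp_assoc)

lemma alg_endo_twist: "alg_endo mu alpha \<Longrightarrow> alg_endo (mu \<circ> T) alpha"
  unfolding alg_endo_def using alpha_lin
  by (metis T_commute comp_assoc)

end

theorem proposition2p4:
  fixes mu :: "('b \<times> 'b \<Rightarrow>\<^sub>0 'k::field) \<Rightarrow> ('b \<Rightarrow>\<^sub>0 'k)"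
    and alpha :: "('b \<Rightarrow>\<^sub>0 'k) \<Rightarrow> ('b \<Rightarrow>\<^sub>0 'k)"
    and T :: "('b \<times> 'b \<Rightarrow>\<^sub>0 'k) \<Rightarrow> ('b \<times> 'b \<Rightarrow>\<^sub>0 'k)"
    and T1 T2 :: "('b \<times> 'b \<times> 'b \<Rightarrow>\<^sub>0 'k) \<Rightarrow> ('b \<times> 'b \<times> 'b \<Rightarrow>\<^sub>0 'k)"
  assumes "assoc_algebra mu"
    and "alg_endo mu alpha"
    and "tmap alpha alpha \<circ> T = T \<circ> tmap alpha alpha"
  shows "(pseudotwistor mu T T1 T2 \<longrightarrow>
            hom_pseudotwistor (alpha \<circ> mu) alpha T T1 T2
          \<and> alg_endo (mu \<circ> T) alpha
          \<and> ((alpha \<circ> mu) \<circ> T, alpha) = (alpha \<circ> (mu \<circ> T), alpha))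
       \<and> (twistor mu T \<longrightarrow> hom_twistor (alpha \<circ> mu) alpha T)"
proof -
  have "lin alpha"
    using assms(2) by (simp add: alg_endo_def)
  note hom_pseudotwistor_yau_twist[OF this assms(3)] hom_twistor_yau_twist[OF this assms(3)]
    alg_endo_twist[OF this assms(3) assms(2)]
  then show ?thesis
    by (simp add: comp_assoc)
qed

end
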